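(* Let $K$ be an (unknown) positive integer, let $0<\mu<1$, and let $\lambda\ge\max\left(\frac{2^{56}}{\mu^2},\ \sqrt[5]{\frac{48}{\mu}\ln K}\right)$. Let $(p,q,\omega)$ be a triple produced by the algorithm described below on input $\lambda$. Then the probability that $q$ divides $K$ is at most $\mu$.
   Context: The algorithm, given $\lambda$ and a failure parameter $\epsilon\in(0,1)$ with $\lambda\ge 2^{58}/\epsilon^2$, proceeds as follows (primality being tested by a deterministic polynomial-time primality test): (1) sample at most $\frac{5}{6}\ln\frac{4}{\epsilon}\ln\lambda$ independent uniformly random odd integers $p\in(\lambda,2\lambda)$ until one is prime; return \textsc{fail} if none is prime. (2) Sample at most $12\ln\frac{4}{\epsilon}\ln\lambda$ independent uniformly random even integers $a\in[1,\lambda^5]$ until $q=ap+1$ is prime; return \textsc{fail} if none gives a prime. (3) Sample at most $\log_p\frac{4}{\epsilon}$ independent uniformly random elements $\zeta\in\mathbb{F}_q^\times$ until $\omega=\zeta^{(q-1)/p}\ne 1$; return \textsc{fail} if $\omega=1$ for every sampled $\zeta$. (4) Return $(p,q,\omega)$. With probability at least $1-\epsilon$ this returns a triple in which $p$ is a uniformly random prime in $(\lambda,2\lambda)$, $q\le\lambda^6$ is a prime with $p\mid q-1$, and $\omega$ is a primitive $p$-th root of unity in $\mathbb{F}_q$. *)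

theory Defs
  imports "HOL-Probability.Probability" "HOL-Computational_Algebra.Primes"
begin

fun try_until :: "nat \<Rightarrow> 'a pmf \<Rightarrow> ('a \<Rightarrow> bool) \<Rightarrow> 'a option pmf" where
  "try_until 0 D P = return_pmf None"
| "try_until (Suc n) D P =
     bind_pmf D (\<lambda>x. if P x then return_pmf (Some x) else try_until n D P)"

text \<open>The parameter generation algorithm on inputs lam (lambda) and eps (epsilon).
Elements of F_q are represented by residues 0..q-1; None means fail.\<close>
definition gen_params :: "real \<Rightarrow> real \<Rightarrow> (nat \<times> nat \<times> nat) option pmf" where
  "gen_params lam eps =
     bind_pmf
       (try_until (nat \<lfloor>5/6 * ln (4/eps) * ln lam\<rfloor>)
          (pmf_of_set {p::nat. odd p \<and> lam < real p \<and> real p < 2 * lam}) prime)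
       (\<lambda>po. case po of
          None \<Rightarrow> return_pmf None
        | Some p \<Rightarrow>
            bind_pmf
              (try_until (nat \<lfloor>12 * ln (4/eps) * ln lam\<rfloor>)
                 (pmf_of_set {a::nat. even a \<and> 1 \<le> a \<and> real a \<le> lam ^ 5})
                 (\<lambda>a. prime (a * p + 1)))
              (\<lambda>ao. case ao of
                 None \<Rightarrow> return_pmf None
               | Some a \<Rightarrow>
                   bind_pmf
                     (try_until (nat \<lceil>log (real p) (4/eps)\<rceil>)
                        (pmf_of_set {1..<a * p + 1})
                        (\<lambda>z. z ^ ((a * p + 1 - 1) div p) mod (a * p + 1) \<noteq> 1))
                     (\<lambda>zo. case zo of
                        None \<Rightarrow> return_pmf None
                      | Some z \<Rightarrow> return_pmf (Some (p, a * p + 1,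
                           z ^ ((a * p + 1 - 1) div p) mod (a * p + 1))))))"

end

theory Submission
  imports Defs
begin

text \<open>
  The output modulus is q = a p + 1, where p and a are the first samples accepted in the first
  two stages. Each particular value is accepted with probability at most the number of trials
  times the uniform probability, so with N1, N2 the trial counts and P, A the sampling ranges of
  these stages, Pr[q dvd K] is at most N1 N2 / (card P * card A) times the number of pairs
  (p, a) with p prime and a p + 1 a prime divisor of K. Such a pair is determined by the
  prime divisor q of K together with the prime factor p of q - 1 <= 2 lambda^6, so there
  are at most log2 K * log2 (2 lambda^6) of them. With N1 N2 <= 10 (ln lambda)^4,
  card P >= lambda/4, card A >= lambda^5/4 and log2 K <= mu lambda^5/32 this is at most
  50 mu (ln lambda)^5 / lambda <= mu.
\<close>

section \<open>Repeated sampling\<close>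

lemma set_pmf_try_until:
  "set_pmf (try_until n D P) \<subseteq> insert None (Some ` {x \<in> set_pmf D. P x})"
  by (induction n) (auto split: if_splits)

lemma pmf_try_until_Some_le: "pmf (try_until n D P) (Some x) \<le> real n * pmf D x"
proof (induction n)
  case 0
  then show ?case by simp
next
  case (Suc n)
  have "pmf (try_until (Suc n) D P) (Some x)
      = (\<integral>y. pmf (if P y then return_pmf (Some y) else try_until n D P) (Some x) \<partial>measure_pmf D)"
    by (simp add: pmf_bind)
  also have "\<dots> \<le> (\<integral>y. indicator {x} y + pmf (try_until n D P) (Some x) \<partial>measure_pmf D)"
    by (intro integral_mono measure_pmf.integrable_const_bound[where B=2])
       (auto simp: indicator_def intro: order_trans[OF pmf_le_1])
  also have "\<dots> = pmf D x + pmf (try_until n D P) (Some x)"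
    by (subst Bochner_Integration.integral_add)
       (auto simp: measure_pmf_single intro: measure_pmf.integrable_const_bound[where B=1])
  also have "\<dots> \<le> real (Suc n) * pmf D x"
    using Suc by (simp add: algebra_simps)
  finally show ?case .
qed

lemma prob_bind_pmf_eq_sum:
  assumes "finite S" "set_pmf M \<subseteq> S"
  shows "measure_pmf.prob (bind_pmf M f) E = (\<Sum>x\<in>S. pmf M x * measure_pmf.prob (f x) E)"
proof -
  have "ennreal (measure_pmf.prob (bind_pmf M f) E)
      = (\<integral>\<^sup>+x. ennreal (measure_pmf.prob (f x) E) \<partial>measure_pmf M)"
    by (simp only: emeasure_bind_pmf flip: measure_pmf.emeasure_eq_measure)
  also have "\<dots> = (\<Sum>x\<in>S. ennreal (measure_pmf.prob (f x) E) * pmf M x)"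
    using assms by (intro nn_integral_measure_pmf_support) auto
  also have "\<dots> = ennreal (\<Sum>x\<in>S. pmf M x * measure_pmf.prob (f x) E)"
    by (simp add: ennreal_mult mult.commute flip: sum_ennreal)
  finally show ?thesis by (simp add: sum_nonneg)
qed

lemma prob_bind_try_until_le:
  assumes "set_pmf D = S" "finite S" "None \<notin> E"
    and "\<And>x. x \<in> S \<Longrightarrow> P x \<Longrightarrow> measure_pmf.prob (f x) E \<le> c x"
  shows "measure_pmf.prob
           (bind_pmf (try_until n D P) (\<lambda>xo. case xo of None \<Rightarrow> return_pmf None | Some x \<Rightarrow> f x)) E
         \<le> (\<Sum>x | x \<in> S \<and> P x. pmf (try_until n D P) (Some x) * c x)"
    (is "measure_pmf.prob (bind_pmf ?T ?f) E \<le> _")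
proof -
  let ?X = "{x \<in> S. P x}"
  have "measure_pmf.prob (bind_pmf ?T ?f) E
      = (\<Sum>xo \<in> insert None (Some ` ?X). pmf ?T xo * measure_pmf.prob (?f xo) E)"
    using assms(1,2) set_pmf_try_until by (intro prob_bind_pmf_eq_sum) auto
  also have "\<dots> = (\<Sum>x\<in>?X. pmf ?T (Some x) * measure_pmf.prob (f x) E)"
    using assms(2,3) by (simp add: sum.reindex measure_pmf_zero_iff)
  also have "\<dots> \<le> (\<Sum>x\<in>?X. pmf ?T (Some x) * c x)"
    using assms(4) by (intro sum_mono mult_left_mono) auto
  finally show ?thesis .
qed

lemma prob_second_stage_dvd_le:
  fixes K p :: nat
  assumes "finite A" "A \<noteq> {}"
  shows "measure_pmf.prob
      (bind_pmf (try_until n (pmf_of_set A) (\<lambda>a. prime (a * p + 1)))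
        (\<lambda>ao. case ao of None \<Rightarrow> return_pmf None
          | Some a \<Rightarrow> bind_pmf (try_until (m a) (D a) (Q a))
              (\<lambda>zo. case zo of None \<Rightarrow> return_pmf None
                | Some z \<Rightarrow> return_pmf (Some (p, a * p + 1, w a z)))))
      {r. \<exists>p q w. r = Some (p, q, w) \<and> q dvd K}
    \<le> real n * card {a \<in> A. prime (a * p + 1) \<and> (a * p + 1) dvd K} / card A"
    (is "measure_pmf.prob (bind_pmf ?T ?f) ?E \<le> _")
proof -
  let ?good = "{a. (a * p + 1) dvd K}"
  have "measure_pmf.prob (bind_pmf ?T ?f) ?E
      \<le> (\<Sum>a | a \<in> A \<and> prime (a * p + 1). pmf ?T (Some a) * indicator ?good a)"
  proof (intro prob_bind_try_until_le)
    fix a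
    let ?g = "bind_pmf (try_until (m a) (D a) (Q a))
              (\<lambda>zo. case zo of None \<Rightarrow> return_pmf None
                | Some z \<Rightarrow> return_pmf (Some (p, a * p + 1, w a z)))"
    show "measure_pmf.prob ?g ?E \<le> indicator ?good a"
    proof (cases "(a * p + 1) dvd K")
      case False
      then have "set_pmf ?g \<inter> ?E = {}"
        by (auto split: option.splits)
      then have "measure_pmf.prob ?g ?E = 0"
        by (simp only: measure_pmf_zero_iff)
      with False show ?thesis
        by simp
    qed simp
  qed (use assms in auto)
  also have "\<dots> \<le> (\<Sum>a | a \<in> A \<and> prime (a * p + 1). real n / card A * indicator ?good a)"
  proof (intro sum_mono mult_right_mono)
    fix a assume "a \<in> {a. a \<in> A \<and> prime (a * p + 1)}"
    then show "pmf ?T (Some a) \<le> real n / card A"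
      using pmf_try_until_Some_le[of n "pmf_of_set A" _ a] assms by simp
  qed simp
  also have "\<dots> = real n * card {a \<in> A. prime (a * p + 1) \<and> (a * p + 1) dvd K} / card A"
  proof -
    let ?X = "{a. a \<in> A \<and> prime (a * p + 1)}"
    have "(\<Sum>a\<in>?X. real n / card A * indicator ?good a) = real n / card A * (\<Sum>a\<in>?X. of_bool (a \<in> ?good))"
      by (simp add: sum_distrib_left indicator_def)
    also have "\<dots> = real n / card A * card (?X \<inter> ?good)"
      using assms(1) by (subst sum_of_bool_eq) auto
    also have "?X \<inter> ?good = {a \<in> A. prime (a * p + 1) \<and> (a * p + 1) dvd K}"
      by auto
    finally show ?thesis
      by simp
  qed
  finally show ?thesis .
qed

section \<open>Counting prime divisors of the form a p + 1\<close>

lemma card_prime_factors_le_log: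
  fixes n :: nat
  assumes "n > 0"
  shows "real (card (prime_factors n)) \<le> log 2 n"
proof -
  have "(2::nat) ^ card (prime_factors n) = (\<Prod>p\<in>prime_factors n. 2)"
    by simp
  also have "\<dots> \<le> (\<Prod>p\<in>prime_factors n. p ^ multiplicity p n)"
  proof (intro prod_mono conjI)
    fix p assume "p \<in> prime_factors n"
    then have "2 \<le> p" "multiplicity p n > 0"
      by (auto simp: prime_factors_multiplicity prime_ge_2_nat)
    then show "2 \<le> p ^ multiplicity p n"
      using self_le_power[of p "multiplicity p n"] by linarith
  qed simp
  also have "\<dots> = n"
    using assms by (subst prod_prime_factors) auto
  finally show ?thesis
    using le_log2_of_power by simp
qed

lemma card_prime_pairs_le:
  fixes K :: nat and B :: real
  assumes "K > 0" "1 \<le> B"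
    and S: "\<And>p a. (p, a) \<in> S \<Longrightarrow>
              prime p \<and> prime (a * p + 1) \<and> (a * p + 1) dvd K \<and> real (a * p) \<le> B"
  shows "real (card S) \<le> log 2 K * log 2 B"
proof -
  let ?Q = "{q \<in> prime_factors K. real (q - 1) \<le> B}"
  let ?T = "SIGMA q:?Q. prime_factors (q - 1)"
  have "card S \<le> card ?T"
  proof (rule card_inj_on_le[where f = "\<lambda>(p, a). (a * p + 1, p)"])
    show "inj_on (\<lambda>(p, a). (a * p + 1, p)) S"
    proof (rule inj_onI)
      fix x y assume "x \<in> S" and eq: "(\<lambda>(p, a). (a * p + 1, p)) x = (\<lambda>(p, a). (a * p + 1, p)) y"
      obtain p a p' a' where "x = (p, a)" "y = (p', a')"
        by fastforce
      moreover have "p > 0"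
        using S \<open>x \<in> S\<close> \<open>x = (p, a)\<close> prime_gt_0_nat by blast
      ultimately show "x = y"
        using eq by auto
    qed
    show "(\<lambda>(p, a). (a * p + 1, p)) ` S \<subseteq> ?T"
    proof
      fix y assume "y \<in> (\<lambda>(p, a). (a * p + 1, p)) ` S"
      then obtain p a where "(p, a) \<in> S" "y = (a * p + 1, p)"
        by auto
      then have "prime p" "prime (a * p + 1)" "(a * p + 1) dvd K" "real (a * p) \<le> B"
        using S by blast+
      moreover have "a \<noteq> 0"
        using \<open>prime (a * p + 1)\<close> by (cases a) auto
      ultimately show "y \<in> ?T"
        using assms(1) \<open>y = (a * p + 1, p)\<close> by (auto simp: prime_factors_dvd prime_gt_0_nat)
    qed
  qed auto
  then have "real (card S) \<le> (\<Sum>q\<in>?Q. real (card (prime_factors (q - 1))))"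
    by (simp flip: of_nat_sum)
  also have "\<dots> \<le> (\<Sum>q\<in>?Q. log 2 B)"
  proof (rule sum_mono)
    fix q assume q: "q \<in> ?Q"
    then have "q - 1 > 0"
      using in_prime_factors_imp_prime prime_gt_1_nat by fastforce
    then have "real (card (prime_factors (q - 1))) \<le> log 2 (q - 1)"
      by (rule card_prime_factors_le_log)
    also have "\<dots> \<le> log 2 B"
      using q \<open>q - 1 > 0\<close> by simp
    finally show "real (card (prime_factors (q - 1))) \<le> log 2 B" .
  qed
  also have "\<dots> = real (card ?Q) * log 2 B"
    by simp
  also have "\<dots> \<le> real (card (prime_factors K)) * log 2 B"
    using assms(2) by (intro mult_right_mono of_nat_mono card_mono) auto
  also have "\<dots> \<le> log 2 K * log 2 B"
    using assms by (intro mult_right_mono card_prime_factors_le_log) auto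
  finally show ?thesis .
qed

section \<open>The sampling ranges\<close>

definition odd_between :: "real \<Rightarrow> nat set" where
  "odd_between x = {p. odd p \<and> x < real p \<and> real p < 2 * x}"

definition even_upto :: "real \<Rightarrow> nat set" where
  "even_upto y = {a. even a \<and> 1 \<le> a \<and> real a \<le> y}"

lemma finite_odd_between: "finite (odd_between x)"
proof (rule finite_subset)
  show "odd_between x \<subseteq> {..nat \<lceil>2 * x\<rceil>}"
    by (auto simp: odd_between_def le_nat_iff) (metis ceiling_mono ceiling_of_nat less_imp_le)
qed simp

lemma finite_even_upto: "finite (even_upto y)"
proof (rule finite_subset)
  show "even_upto y \<subseteq> {..nat \<lceil>y\<rceil>}"
    by (auto simp: even_upto_def le_nat_iff) (metis ceiling_mono ceiling_of_nat)
qed simp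

lemma card_odd_between_ge:
  assumes "6 \<le> x"
  shows "x / 4 \<le> real (card (odd_between x))"
proof -
  define n where "n = nat \<lfloor>x\<rfloor>"
  have n: "real n \<le> x" "x < real n + 1"
    using assms unfolding n_def by linarith+
  have "(\<lambda>k. 2 * k + 1) ` {n div 2 + 1 ..< n} \<subseteq> odd_between x"
    using n by (auto simp: odd_between_def)
  moreover have "inj (\<lambda>k::nat. 2 * k + 1)"
    by (auto simp: inj_def)
  ultimately have "card {n div 2 + 1 ..< n} \<le> card (odd_between x)"
    using card_mono[OF finite_odd_between] card_image by (metis inj_on_subset subset_UNIV)
  moreover have "real (n div 2) \<le> real n / 2"
    by linarith
  ultimately show ?thesis
    using n assms by simp
qed

lemma card_even_upto_ge:
  assumes "4 \<le> y"
  shows "y / 4 \<le> real (card (even_upto y))"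
proof -
  define m where "m = nat \<lfloor>y / 2\<rfloor>"
  have m: "2 * real m \<le> y" "y / 2 < real m + 1"
    using assms unfolding m_def by linarith+
  have "(\<lambda>k. 2 * k) ` {1..m} \<subseteq> even_upto y"
    using m by (auto simp: even_upto_def)
  moreover have "inj (\<lambda>k::nat. 2 * k)"
    by (auto simp: inj_def)
  ultimately have "card {1..m} \<le> card (even_upto y)"
    using card_mono[OF finite_even_upto] card_image by (metis inj_on_subset subset_UNIV)
  then show ?thesis
    using m assms by simp
qed

lemma card_odd_between_even_upto_ge:
  assumes "6 \<le> lam"
  shows "lam ^ 6 / 16 \<le> real (card (odd_between lam)) * real (card (even_upto (lam ^ 5)))"
proof -
  have "lam \<le> lam ^ 5"
    using assms by (simp add: power_increasing[of 1 5, simplified])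
  then have "lam / 4 \<le> card (odd_between lam)" "lam ^ 5 / 4 \<le> card (even_upto (lam ^ 5))"
    using assms card_odd_between_ge[of lam] card_even_upto_ge[of "lam ^ 5"] by auto
  moreover have "lam ^ 6 / 16 = (lam / 4) * (lam ^ 5 / 4)"
    by (simp add: power_eq_if)
  ultimately show ?thesis
    using assms by (simp only:) (intro mult_mono, auto)
qed

definition divisor_choices :: "real \<Rightarrow> nat \<Rightarrow> (nat \<times> nat) set" where
  "divisor_choices lam K = {(p, a). p \<in> odd_between lam \<and> prime p \<and>
     a \<in> even_upto (lam ^ 5) \<and> prime (a * p + 1) \<and> (a * p + 1) dvd K}"

lemma card_divisor_choices_le:
  fixes K :: nat
  assumes "K > 0" "1 \<le> lam"
  shows "real (card (divisor_choices lam K)) \<le> log 2 K * log 2 (2 * lam ^ 6)"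
proof (rule card_prime_pairs_le)
  fix p a assume "(p, a) \<in> divisor_choices lam K"
  then have "prime p" "prime (a * p + 1)" "(a * p + 1) dvd K" "real a \<le> lam ^ 5" "real p < 2 * lam"
    by (auto simp: divisor_choices_def odd_between_def even_upto_def)
  moreover have "real a * real p \<le> lam ^ 5 * (2 * lam)"
    using calculation assms(2) by (intro mult_mono) auto
  ultimately show "prime p \<and> prime (a * p + 1) \<and> (a * p + 1) dvd K \<and> real (a * p) \<le> 2 * lam ^ 6"
    by (simp add: power_eq_if)
next
  show "1 \<le> 2 * lam ^ 6"
    using one_le_power[OF assms(2), of 6] by linarith
qed (use assms in auto)

lemma prob_gen_params_dvd_le:
  fixes K :: nat and lam eps :: real
  assumes "K > 0" "6 \<le> lam"
  defines "N\<^sub>1 \<equiv> real (nat \<lfloor>5/6 * ln (4/eps) * ln lam\<rfloor>)"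
    and "N\<^sub>2 \<equiv> real (nat \<lfloor>12 * ln (4/eps) * ln lam\<rfloor>)"
  shows "measure_pmf.prob (gen_params lam eps) {r. \<exists>p q w. r = Some (p, q, w) \<and> q dvd K}
    \<le> 16 * (N\<^sub>1 * N\<^sub>2) / lam ^ 6 * (log 2 K * log 2 (2 * lam ^ 6))"
proof -
  let ?P = "odd_between lam" and ?A = "even_upto (lam ^ 5)"
  define G where "G p = {a \<in> ?A. prime (a * p + 1) \<and> (a * p + 1) dvd K}" for p
  have cards: "lam ^ 6 / 16 \<le> real (card ?P) * real (card ?A)"
    using assms(2) by (rule card_odd_between_even_upto_ge)
  moreover have "0 < lam ^ 6 / 16"
    using assms(2) by simp
  ultimately have pos: "0 < real (card ?P) * real (card ?A)"
    by linarith
  then have nonempty: "?P \<noteq> {}" "?A \<noteq> {}"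
    by auto
  have "measure_pmf.prob (gen_params lam eps) {r. \<exists>p q w. r = Some (p, q, w) \<and> q dvd K}
      \<le> (\<Sum>p | p \<in> ?P \<and> prime p.
            pmf (try_until (nat \<lfloor>5/6 * ln (4/eps) * ln lam\<rfloor>) (pmf_of_set ?P) prime) (Some p)
            * (N\<^sub>2 * card (G p) / card ?A))"
    unfolding gen_params_def odd_between_def[symmetric] even_upto_def[symmetric] G_def N\<^sub>2_def
    using nonempty finite_odd_between finite_even_upto
    by (intro prob_bind_try_until_le prob_second_stage_dvd_le) auto
  also have "\<dots> \<le> (\<Sum>p | p \<in> ?P \<and> prime p. N\<^sub>1 / card ?P * (N\<^sub>2 * card (G p) / card ?A))"
  proof (intro sum_mono mult_right_mono)
    fix p assume "p \<in> {p. p \<in> ?P \<and> prime p}"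
    then show "pmf (try_until (nat \<lfloor>5/6 * ln (4/eps) * ln lam\<rfloor>) (pmf_of_set ?P) prime) (Some p)
        \<le> N\<^sub>1 / card ?P"
      using pmf_try_until_Some_le[of _ "pmf_of_set ?P" prime p] nonempty finite_odd_between
      by (simp add: N\<^sub>1_def)
  qed (simp_all add: N\<^sub>2_def)
  also have "\<dots> = N\<^sub>1 * N\<^sub>2 / (real (card ?P) * real (card ?A)) * card (SIGMA p:{p \<in> ?P. prime p}. G p)"
    by (simp add: finite_odd_between G_def finite_even_upto sum_distrib_left mult.assoc)
  also have "(SIGMA p:{p \<in> ?P. prime p}. G p) = divisor_choices lam K"
    by (auto simp: divisor_choices_def G_def)
  also have "N\<^sub>1 * N\<^sub>2 / (real (card ?P) * real (card ?A)) * card (divisor_choices lam K)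
      \<le> N\<^sub>1 * N\<^sub>2 / (lam ^ 6 / 16) * (log 2 K * log 2 (2 * lam ^ 6))"
    using cards pos \<open>0 < lam ^ 6 / 16\<close> assms card_divisor_choices_le[of K lam]
    by (intro mult_mono divide_left_mono mult_pos_pos[OF pos]) (auto simp: N\<^sub>1_def N\<^sub>2_def)
  finally show ?thesis
    by (simp add: mult.commute)
qed

section \<open>Numerical estimates\<close>

lemma trial_counts_le:
  fixes lam eps :: real
  assumes "0 < eps" "eps < 4" "1 \<le> lam" "2 ^ 58 / eps ^ 2 \<le> lam"
  shows "real (nat \<lfloor>5/6 * ln (4/eps) * ln lam\<rfloor>) * real (nat \<lfloor>12 * ln (4/eps) * ln lam\<rfloor>)
         \<le> 10 * ln lam ^ 4"
proof -
  have "2 ^ 58 \<le> eps ^ 2 * lam"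
    using assms(1,4) by (simp add: divide_le_eq mult.commute)
  then have "2 ^ 58 * lam \<le> (eps * lam) ^ 2"
    using assms(3) mult_right_mono[of "2 ^ 58" "eps ^ 2 * lam" lam] by (simp add: power2_eq_square)
  moreover have "(4::real) ^ 2 \<le> 2 ^ 58 * lam"
    using assms(3) by simp
  ultimately have "4 ^ 2 \<le> (eps * lam) ^ 2"
    by linarith
  then have "4 \<le> eps * lam"
    by (rule power2_le_imp_le) (use assms(1,3) in simp)
  then have "4 / eps \<le> lam"
    using assms(1) by (simp add: divide_le_eq mult.commute)
  moreover have "1 \<le> 4 / eps"
    using assms(1,2) by simp
  ultimately have L: "0 \<le> ln (4/eps)" "ln (4/eps) \<le> ln lam"
    using assms(1,3) by simp_all
  have floor_le: "real (nat \<lfloor>x\<rfloor>) \<le> x" if "0 \<le> x" for x :: real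
    using that by linarith
  have "real (nat \<lfloor>5/6 * ln (4/eps) * ln lam\<rfloor>) * real (nat \<lfloor>12 * ln (4/eps) * ln lam\<rfloor>)
      \<le> (5/6 * ln (4/eps) * ln lam) * (12 * ln (4/eps) * ln lam)"
    using L assms(3) by (intro mult_mono floor_le) auto
  also have "\<dots> = 10 * (ln (4/eps) * ln lam) ^ 2"
    by (simp add: power2_eq_square)
  also have "\<dots> \<le> 10 * (ln lam * ln lam) ^ 2"
    using L assms(3) by (intro mult_left_mono power_mono mult_right_mono) auto
  also have "\<dots> = 10 * ln lam ^ 4"
    by (simp add: eval_nat_numeral)
  finally show ?thesis .
qed

lemma ln_pow5_le:
  fixes x :: real
  assumes "2 ^ 56 \<le> x"
  shows "54 * ln x ^ 5 \<le> x"
proof -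
  have x: "0 < x" "1 \<le> x"
    using assms by simp_all
  have "ln x = 10 * ln (x powr (1/10))"
    using x by simp
  also have "\<dots> \<le> 10 * x powr (1/10)"
    using ln_less_self[of "x powr (1/10)"] x by simp
  finally have "ln x ^ 5 \<le> (10 * x powr (1/10)) ^ 5"
    using x by (intro power_mono) auto
  also have "\<dots> = 10 ^ 5 * (x powr (1/10)) ^ 5"
    by (simp add: power_mult_distrib)
  also have "(x powr (1/10)) ^ 5 = sqrt x"
    using x by (simp add: powr_realpow [symmetric] powr_powr powr_half_sqrt)
  finally have "54 * ln x ^ 5 \<le> 54 * 10 ^ 5 * sqrt x"
    by simp
  also have "\<dots> \<le> sqrt x * sqrt x"
  proof (rule mult_right_mono)
    have "((2::real) ^ 28) ^ 2 = 2 ^ 56"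
      by simp
    then have "sqrt ((2 ^ 28) ^ 2) \<le> sqrt x"
      using assms by (simp only: real_sqrt_le_iff)
    then show "54 * 10 ^ 5 \<le> sqrt x"
      by simp
  qed (use x in simp)
  also have "\<dots> = x"
    using x by simp
  finally show ?thesis .
qed

lemma log2_le_ln:
  fixes x :: real
  assumes "1 \<le> x"
  shows "log 2 x \<le> 3/2 * ln x"
proof -
  have "log 2 x = ln x / ln 2"
    by (simp add: log_def)
  also have "\<dots> \<le> ln x / (2/3)"
    using assms ln2_ge_two_thirds by (intro divide_left_mono) auto
  finally show ?thesis
    by simp
qed

lemma divisor_bound_le:
  fixes lam mu N L :: real
  assumes lam: "2 ^ 56 \<le> lam" and "0 < mu"
    and "0 \<le> N" "N \<le> 10 * ln lam ^ 4" and "0 \<le> L" "L \<le> mu * lam ^ 5 / 32"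
  shows "16 * N / lam ^ 6 * (L * log 2 (2 * lam ^ 6)) \<le> mu"
proof -
  have "1 \<le> lam" "1 \<le> ln lam"
    using lam ln_ge_iff[of lam 1] exp_le by auto
  have "1 \<le> 2 * lam ^ 6"
    using one_le_power[OF \<open>1 \<le> lam\<close>, of 6] by linarith
  then have "0 \<le> log 2 (2 * lam ^ 6)"
    by (subst zero_le_log_cancel_iff) auto
  have log_B: "log 2 (2 * lam ^ 6) \<le> 10 * ln lam"
    using log2_le_ln[of lam] \<open>1 \<le> lam\<close> \<open>1 \<le> ln lam\<close> by (simp add: log_mult log_nat_power)
  have "16 * N / lam ^ 6 * (L * log 2 (2 * lam ^ 6))
      \<le> 16 * (10 * ln lam ^ 4) / lam ^ 6 * (mu * lam ^ 5 / 32 * (10 * ln lam))"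
  proof (rule mult_mono)
    show "16 * N / lam ^ 6 \<le> 16 * (10 * ln lam ^ 4) / lam ^ 6"
      using assms(4) by (intro divide_right_mono) auto
    show "L * log 2 (2 * lam ^ 6) \<le> mu * lam ^ 5 / 32 * (10 * ln lam)"
      using assms(2,5,6) \<open>0 \<le> log 2 (2 * lam ^ 6)\<close> \<open>1 \<le> lam\<close> log_B
      by (intro mult_mono) auto
  qed (use assms(3,5) \<open>0 \<le> log 2 (2 * lam ^ 6)\<close> \<open>1 \<le> ln lam\<close> in auto)
  also have "\<dots> = mu * (50 * ln lam ^ 5) / lam"
    using lam by (simp add: field_simps eval_nat_numeral)
  also have "\<dots> \<le> mu"
    using ln_pow5_le[OF lam] lam assms(2) by (simp add: divide_le_eq)
  finally show ?thesis .
qed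

theorem theorem2:
  fixes K :: nat and mu lam eps :: real
  assumes "K > 0"
    and "0 < mu" and "mu < 1"
    and "lam \<ge> max (2 ^ 56 / mu ^ 2) (root 5 (48 / mu * ln (real K)))"
    and "0 < eps" and "eps < 1" and "lam \<ge> 2 ^ 58 / eps ^ 2"
  shows "measure_pmf.prob (gen_params lam eps)
           {r. \<exists>p q w. r = Some (p, q, w) \<and> q dvd K} \<le> mu"
proof -
  let ?N = "real (nat \<lfloor>5/6 * ln (4/eps) * ln lam\<rfloor>) * real (nat \<lfloor>12 * ln (4/eps) * ln lam\<rfloor>)"
  have "(2::real) ^ 56 \<le> 2 ^ 56 / mu ^ 2"
    using assms(2,3) by (simp add: le_divide_eq power_le_one)
  then have lam: "2 ^ 56 \<le> lam"
    using assms(4) by linarith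
  have "48 / mu * ln K \<le> lam ^ 5"
    using assms(4) lam real_root_le_iff[of 5 _ "lam ^ 5"] real_root_power_cancel[of 5 lam] by simp
  then have "log 2 K \<le> mu * lam ^ 5 / 32"
    using log2_le_ln[of K] assms(1,2) by (simp add: field_simps)
  moreover have "?N \<le> 10 * ln lam ^ 4"
    using lam assms(5,6,7) by (intro trial_counts_le) auto
  moreover have "measure_pmf.prob (gen_params lam eps) {r. \<exists>p q w. r = Some (p, q, w) \<and> q dvd K}
      \<le> 16 * ?N / lam ^ 6 * (log 2 K * log 2 (2 * lam ^ 6))"
    using assms(1) lam by (intro prob_gen_params_dvd_le) auto
  ultimately show ?thesis
    using lam assms(1,2) by (elim order_trans) (intro divisor_bound_le, auto)
qed

end
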